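(* For $n\in\mathbb{Z}^+$ we have $$\begin{aligned}&t(1,3,16;n)=2N(1,3,16;2n+5)=t(2,2,3;(n-1)/4)&&\text{for } n\equiv 1\pmod 4,\\ &t(1,3,48;n)=2N(1,3,48;2n+13)=t(1,6,6;n/4)&&\text{for } n\equiv 0\pmod 4,\\ &t(1,3,4;n)=\tfrac 43N(1,3,4;2n+2)&&\text{for } n\equiv 3,5\pmod 8,\\ &t(1,3,12;n)=\tfrac 43N(1,3,12;2n+4)&&\text{for } n\equiv 0,2\pmod 8,\\ &t(1,3,36;n)=\tfrac 43N(1,3,36;2n+10)&&\text{for } n\equiv 1,7\pmod 8,\\ &t(3,4,9;n)=\tfrac 43N(3,4,9;2n+4)&&\text{for } n\equiv 2,4\pmod 8.\end{aligned}$$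
   Context: $\mathbb{Z}^+$ is the set of positive integers. For $a,b,c\in\mathbb{Z}^+$ and nonnegative integer $n$, $N(a,b,c;n)$ denotes the number of triples $(x,y,z)\in\mathbb{Z}^3$ with $n=ax^2+by^2+cz^2$, and $t(a,b,c;n)$ denotes the number of triples $(x,y,z)\in\mathbb{Z}^3$ with $n=a\frac{x(x+1)}2+b\frac{y(y+1)}2+c\frac{z(z+1)}2$. *)

theory Defs
  imports Complex_Main
begin

definition N :: "nat \<Rightarrow> nat \<Rightarrow> nat \<Rightarrow> nat \<Rightarrow> nat" where
  "N a b c n = card {(x :: int, y :: int, z :: int).
       int n = int a * x^2 + int b * y^2 + int c * z^2}"

definition t :: "nat \<Rightarrow> nat \<Rightarrow> nat \<Rightarrow> nat \<Rightarrow> nat" where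
  "t a b c n = card {(x :: int, y :: int, z :: int).
       int n = int a * (x * (x + 1) div 2) + int b * (y * (y + 1) div 2)
             + int c * (z * (z + 1) div 2)}"

end

theory Submission
  imports Defs
begin

(* Writing x = 2x' + 1, t(a,b,c;n) counts the odd solutions of a x^2 + b y^2 + c z^2 = 8n + a + b + c,
   so each identity compares numbers of representations by ternary forms, and these are matched by
   explicit bijections. The main one lives in Z[sqrt(-3)]: the pairs of odd integers with
   x^2 + 3y^2 = 4m are exactly the products (1 +- sqrt(-3))(u + v sqrt(-3)) with u^2 + 3v^2 = m odd,
   so there are twice as many of them; together with the pairs of even integers this gives
   r(4m) = 3 r(m). Applying this once to N and twice to t expresses both through the same ternary
   count C, as N = 3|C| and t = 4|C|. For the first two identities the identity
   2(x^2 + y^2) = (x + y)^2 + (x - y)^2 and the involution exchanging w/2 and z in w^2 + 4z^2 play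
   the same role. Congruences mod 8 determine the parities needed at each step. *)

(* No finiteness assumption is needed: if C is infinite, both sides are 0. *)
lemma card_Un_bij_betw_copies:
  assumes "bij_betw f C A" "bij_betw g C B" "A \<inter> B = {}"
  shows "card (A \<union> B) = 2 * card C"
proof (cases "finite C")
  case True
  then have "finite A" "finite B" using assms(1,2) bij_betw_finite by blast+
  then show ?thesis
    using card_Un_disjoint assms bij_betw_same_card by (metis mult_2)
next
  case False
  then have "infinite (A \<union> B)" using assms(1) bij_betw_finite by blast
  then show ?thesis using False by simp
qed

lemma card_swap23: "card {(x, z, y). P x y z} = card {(x, y, z). P x y z}"
  by (rule bij_betw_same_card[of "\<lambda>(x, z, y). (x, y, z)"]) (auto simp: bij_betw_def inj_on_def image_def)

lemma card_swap13: "card {(z, y, x). P x y z} = card {(x, y, z). P x y z}"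
  by (rule bij_betw_same_card[of "\<lambda>(z, y, x). (x, y, z)"]) (auto simp: bij_betw_def inj_on_def image_def)

lemma card_rotate: "card {(y, z, x). P x y z} = card {(x, y, z). P x y z}"
  by (rule bij_betw_same_card[of "\<lambda>(y, z, x). (x, y, z)"]) (auto simp: bij_betw_def inj_on_def image_def)

lemma card_even_third:
  "card {(x, y, z). even (z::int) \<and> P x y z} = card {(x, y, z). P x y (2 * z)}"
proof -
  have "{(x, y, z). even z \<and> P x y z} = (\<lambda>(x, y, z). (x, y, 2 * z)) ` {(x, y, z). P x y (2 * z)}"
    by (auto simp: image_def elim!: evenE)
  moreover have "inj_on (\<lambda>(x, y, z). (x, y, 2 * (z::int))) A" for A :: "('a \<times> 'b \<times> int) set"
    by (auto simp: inj_on_def)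
  ultimately show ?thesis by (simp add: card_image)
qed

lemma card_even_first_second:
  "card {(x, y, z). even (x::int) \<and> even (y::int) \<and> P x y z} = card {(x, y, z). P (2 * x) (2 * y) z}"
proof -
  have "{(x, y, z). even x \<and> even y \<and> P x y z} = (\<lambda>(x, y, z). (2 * x, 2 * y, z)) ` {(x, y, z). P (2 * x) (2 * y) z}"
    by (auto simp: image_def elim!: evenE)
  moreover have "inj_on (\<lambda>(x, y, z). (2 * x, 2 * (y::int), z)) A" for A :: "(int \<times> int \<times> 'a) set"
    by (auto simp: inj_on_def)
  ultimately show ?thesis by (simp add: card_image)
qed

(* (u + 3v) + (v - u) sqrt(-3) = (1 - sqrt(-3)) (u + v sqrt(-3)) *)
lemma bij_betw_x2_3y2_times_4:
  fixes P :: "int \<Rightarrow> 'a \<Rightarrow> bool"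
  shows "bij_betw (\<lambda>(u, v, z). (u + 3 * v, v - u, z))
           {(u, v, z). odd (u^2 + 3 * v^2) \<and> P (4 * (u^2 + 3 * v^2)) z}
           {(x, y, z). odd x \<and> odd y \<and> P (x^2 + 3 * y^2) z \<and> 4 dvd (x + y)}"
proof -
  let ?f = "\<lambda>(u, v, z). (u + 3 * v, v - u, z)"
  let ?B = "{(u, v, z). odd (u^2 + 3 * v^2) \<and> P (4 * (u^2 + 3 * v^2)) z}"
  let ?S = "{(x, y, z). odd x \<and> odd y \<and> P (x^2 + 3 * y^2) z \<and> 4 dvd (x + y)}"
  have norm: "(u + 3 * v)^2 + 3 * (v - u)^2 = 4 * (u^2 + 3 * v^2)" for u v :: int
    by (simp add: power2_eq_square algebra_simps)
  have "inj_on ?f ?B"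
    by (auto simp: inj_on_def)
  moreover have "?f ` ?B \<subseteq> ?S"
  proof clarify
    fix u v z assume "odd (u^2 + 3 * v^2)" "P (4 * (u^2 + 3 * v^2)) z"
    moreover have "4 dvd (u + 3 * v) + (v - u)"
      by simp
    ultimately show "odd (u + 3 * v) \<and> odd (v - u) \<and> P ((u + 3 * v)^2 + 3 * (v - u)^2) z \<and>
        4 dvd (u + 3 * v) + (v - u)"
      unfolding norm by auto
  qed
  moreover have "?S \<subseteq> ?f ` ?B"
  proof clarify
    fix x y z assume "odd x" "odd y" and P: "P (x^2 + 3 * y^2) z" and "4 dvd x + y"
    then obtain k where y: "y = k - (x - 3 * k)"
      by (auto simp: dvd_def algebra_simps)
    have "x^2 + 3 * y^2 = 4 * ((x - 3 * k)^2 + 3 * k^2)"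
      using norm[of "x - 3 * k" k] y by simp
    then have "(x - 3 * k, k, z) \<in> ?B"
      using \<open>odd x\<close> P by simp
    moreover have "(x, y, z) = ?f (x - 3 * k, k, z)"
      using y by simp
    ultimately show "(x, y, z) \<in> ?f ` ?B"
      by blast
  qed
  ultimately show ?thesis
    unfolding bij_betw_def by blast
qed

lemma card_odd_x2_3y2:
  fixes P :: "int \<Rightarrow> 'a \<Rightarrow> bool"
  shows "card {(x, y, z). odd x \<and> odd y \<and> P (x^2 + 3 * y^2) z}
       = 2 * card {(u, v, z). odd (u^2 + 3 * v^2) \<and> P (4 * (u^2 + 3 * v^2)) z}"
proof -
  let ?S_plus = "{(x, y, z). odd x \<and> odd y \<and> P (x^2 + 3 * y^2) z \<and> 4 dvd (x + y)}"
  let ?S_minus = "{(x, y, z). odd x \<and> odd y \<and> P (x^2 + 3 * y^2) z \<and> 4 dvd (x - y)}"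
  note plus = bij_betw_x2_3y2_times_4[of P]
  have "bij_betw (\<lambda>(x, y, z). (x, - y, z)) ?S_plus ?S_minus"
    by (rule bij_betw_byWitness[where f'="\<lambda>(x, y, z). (x, - y, z)"]) auto
  note minus = bij_betw_trans[OF plus this]
  have "{(x, y, z). odd x \<and> odd y \<and> P (x^2 + 3 * y^2) z} = ?S_plus \<union> ?S_minus"
    by auto presburger
  moreover have "?S_plus \<inter> ?S_minus = {}"
    by auto presburger
  ultimately show ?thesis
    using card_Un_bij_betw_copies[OF plus minus] by simp
qed

lemma card_x2_3y2_eq_3_times:
  fixes P :: "int \<Rightarrow> 'a \<Rightarrow> bool"
  assumes fin: "finite {(x, y, z). P (x^2 + 3 * y^2) z}"
    and even: "\<And>s z. P s z \<Longrightarrow> even s"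
    and odd: "\<And>u v z. P (4 * (u^2 + 3 * v^2)) z \<Longrightarrow> odd (u^2 + 3 * v^2)"
  shows "card {(x, y, z). P (x^2 + 3 * y^2) z} = 3 * card {(u, v, z). P (4 * (u^2 + 3 * v^2)) z}"
proof -
  let ?E = "{(x, y, z). even x \<and> even y \<and> P (x^2 + 3 * y^2) z}"
  let ?O = "{(x, y, z). odd x \<and> odd y \<and> P (x^2 + 3 * y^2) z}"
  have "even x = even y" if "P (x^2 + 3 * y^2) z" for x y z
    using even[OF that] by simp
  then have split: "{(x, y, z). P (x^2 + 3 * y^2) z} = ?E \<union> ?O"
    by auto
  have fin_EO: "finite ?E" "finite ?O"
    by (rule finite_subset[OF _ fin]; auto)+
  have "(2 * x)^2 + 3 * (2 * y)^2 = 4 * (x^2 + 3 * y^2)" for x y :: int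
    by (simp add: power_mult_distrib)
  then have card_E: "card ?E = card {(u, v, z). P (4 * (u^2 + 3 * v^2)) z}"
    using card_even_first_second[of "\<lambda>x y z. P (x^2 + 3 * y^2) z"] by simp
  have "{(u, v, z). odd (u^2 + 3 * v^2) \<and> P (4 * (u^2 + 3 * v^2)) z} = {(u, v, z). P (4 * (u^2 + 3 * v^2)) z}"
    using odd by blast
  then have card_O: "card ?O = 2 * card {(u, v, z). P (4 * (u^2 + 3 * v^2)) z}"
    using card_odd_x2_3y2[of P] by simp
  have "?E \<inter> ?O = {}"
    by auto
  then show ?thesis
    unfolding split using card_Un_disjoint[OF fin_EO] card_E card_O by simp
qed

lemma bij_betw_x2_16y2_odd:
  fixes P :: "int \<Rightarrow> 'a \<Rightarrow> bool"
  assumes cong: "\<And>w z e. P (w^2 + 4 * z^2) e \<Longrightarrow> even w \<and> odd (w div 2 + z)"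
  shows "bij_betw (\<lambda>(w, z, e). (4 * z, w div 2, e))
           {(w, z, e). P (w^2 + 16 * z^2) e} {(w, z, e). odd z \<and> P (w^2 + 4 * z^2) e}"
proof -
  let ?f = "\<lambda>(w, z, e). (4 * z, w div 2, e)" and ?g = "\<lambda>(w, z, e). (2 * z, w div 4, e)"
  let ?A = "{(w, z, e). P (w^2 + 16 * z^2) e}" and ?B = "{(w, z, e). odd z \<and> P (w^2 + 4 * z^2) e}"
  have half: "w^2 + 16 * z^2 = (4 * z)^2 + 4 * (w div 2)^2" if "even w" for w z :: int
    using that by (auto simp: power_mult_distrib elim!: evenE)
  have quarter: "w^2 + 4 * z^2 = (2 * z)^2 + 16 * (w div 4)^2" if "4 dvd w" for w z :: int
    using that by (auto simp: power_mult_distrib elim!: dvdE)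
  have cong16: "even w \<and> odd (w div 2)" if "P (w^2 + 16 * z^2) e" for w z e
    using cong[of w "2 * z" e] that by (simp add: power_mult_distrib)
  have cong4: "4 dvd w" if "P (w^2 + 4 * z^2) e" "odd z" for w z e
    using cong[OF that(1)] that(2) by presburger
  have left_inverse: "\<forall>p \<in> ?A. ?g (?f p) = p"
    using cong16 by (auto elim!: evenE)
  have right_inverse: "\<forall>p \<in> ?B. ?f (?g p) = p"
    using cong4 by (auto elim!: dvdE)
  have "?f ` ?A \<subseteq> ?B"
  proof clarify
    fix w z e assume "P (w^2 + 16 * z^2) e"
    then show "odd (w div 2) \<and> P ((4 * z)^2 + 4 * (w div 2)^2) e"
      using cong16 half by metis
  qed
  moreover have "?g ` ?B \<subseteq> ?A"
  proof clarify
    fix w z e assume "odd z" "P (w^2 + 4 * z^2) e"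
    then show "P ((2 * z)^2 + 16 * (w div 4)^2) e"
      using cong4 quarter by metis
  qed
  ultimately show ?thesis
    by (rule bij_betw_byWitness[OF left_inverse right_inverse])
qed

lemma card_x2_4y2_eq_double:
  fixes P :: "int \<Rightarrow> 'a \<Rightarrow> bool"
  assumes cong: "\<And>w z e. P (w^2 + 4 * z^2) e \<Longrightarrow> even w \<and> odd (w div 2 + z)"
  shows "card {(w, z, e). P (w^2 + 4 * z^2) e} = 2 * card {(w, z, e). P (w^2 + 16 * z^2) e}"
proof -
  have even_part: "bij_betw (\<lambda>(w, z, e). (w, 2 * z, e))
          {(w, z, e). P (w^2 + 16 * z^2) e} {(w, z, e). even z \<and> P (w^2 + 4 * z^2) e}"
    by (rule bij_betw_byWitness[where f'="\<lambda>(w, z, e). (w, z div 2, e)"])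
       (auto simp: power_mult_distrib elim!: evenE)
  have "{(w, z, e). P (w^2 + 4 * z^2) e}
      = {(w, z, e). odd z \<and> P (w^2 + 4 * z^2) e} \<union> {(w, z, e). even z \<and> P (w^2 + 4 * z^2) e}"
    by auto
  moreover have "{(w, z, e). odd z \<and> P (w^2 + 4 * z^2) e} \<inter> {(w, z, e). even z \<and> P (w^2 + 4 * z^2) e} = {}"
    by auto
  ultimately show ?thesis
    using card_Un_bij_betw_copies[OF bij_betw_x2_16y2_odd[of P, OF cong] even_part] by simp
qed

lemma card_odd_2x2_2y2:
  fixes P :: "int \<Rightarrow> 'a \<Rightarrow> bool"
  assumes cong: "\<And>w z e. P (w^2 + 4 * z^2) e \<Longrightarrow> even w \<and> odd (w div 2 + z)"
  shows "card {(x, y, e). odd x \<and> odd y \<and> P (2 * (x^2 + y^2)) e} = card {(w, z, e). P (w^2 + 4 * z^2) e}"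
proof -
  let ?f = "\<lambda>(x, y, e). (x + y, (x - y) div 2, e)" and ?g = "\<lambda>(w, z, e). (w div 2 + z, w div 2 - z, e)"
  let ?A = "{(x, y, e). odd x \<and> odd y \<and> P (2 * (x^2 + y^2)) e}" and ?B = "{(w, z, e). P (w^2 + 4 * z^2) e}"
  have sum: "2 * ((m + z)^2 + (m - z)^2) = (2 * m)^2 + 4 * z^2" for m z :: int
    by (simp add: power2_eq_square algebra_simps)
  have "(x + y) div 2 + (x - y) div 2 = x \<and> (x + y) div 2 - (x - y) div 2 = y" if "odd x" "odd y" for x y :: int
    using that by presburger
  then have left_inverse: "\<forall>p \<in> ?A. ?g (?f p) = p"
    by auto
  have "w div 2 + z + (w div 2 - z) = w" if "P (w^2 + 4 * z^2) e" for w z e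
    using cong[OF that] by simp
  then have right_inverse: "\<forall>p \<in> ?B. ?f (?g p) = p"
    by auto
  have "?f ` ?A \<subseteq> ?B"
  proof clarify
    fix x y e assume "odd x" "odd y" and P: "P (2 * (x^2 + y^2)) e"
    then obtain k where "x - y = 2 * k"
      by (metis evenE odd_add odd_one even_diff)
    then have "x = y + 2 * k"
      by simp
    then have "2 * (x^2 + y^2) = (x + y)^2 + 4 * ((x - y) div 2)^2"
      by (simp add: power2_eq_square algebra_simps)
    with P show "P ((x + y)^2 + 4 * ((x - y) div 2)^2) e"
      by simp
  qed
  moreover have "?g ` ?B \<subseteq> ?A"
  proof clarify
    fix w z e assume P: "P (w^2 + 4 * z^2) e"
    then obtain m where w: "w = 2 * m" and "odd (m + z)"
      using cong by fastforce
    then have "odd (m - z)"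
      by presburger
    then show "odd (w div 2 + z) \<and> odd (w div 2 - z) \<and> P (2 * ((w div 2 + z)^2 + (w div 2 - z)^2)) e"
      using \<open>odd (m + z)\<close> P sum[of m z] w by simp
  qed
  ultimately show ?thesis
    using bij_betw_same_card bij_betw_byWitness[OF left_inverse right_inverse] by blast
qed

lemma t_eq_card_odd:
  "t a b c n = card {(x, y, z). odd x \<and> odd y \<and> odd z \<and>
     int a * x^2 + int b * y^2 + int c * z^2 = int (8 * n + a + b + c)}"
proof -
  have tri: "int k * (2 * x + 1)^2 = 8 * (int k * (x * (x + 1) div 2)) + int k" for k x
  proof -
    have "even (x * (x + 1))" by simp
    then have "x * (x + 1) div 2 * 2 = x * (x + 1)" by simp
    then have "8 * (x * (x + 1) div 2) = 4 * (x * (x + 1))"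
      by linarith
    then have "(2 * x + 1)^2 = 8 * (x * (x + 1) div 2) + 1"
      by (simp add: power2_eq_square algebra_simps)
    then show ?thesis
      by (simp add: algebra_simps)
  qed
  have key: "int a * (2 * x + 1)^2 + int b * (2 * y + 1)^2 + int c * (2 * z + 1)^2 = int (8 * n + a + b + c)
      \<longleftrightarrow> int n = int a * (x * (x + 1) div 2) + int b * (y * (y + 1) div 2) + int c * (z * (z + 1) div 2)"
    for x y z
    by (simp add: tri) linarith
  let ?f = "\<lambda>(x :: int, y :: int, z :: int). (2 * x + 1, 2 * y + 1, 2 * z + 1)"
  let ?T = "{(x, y, z). int n = int a * (x * (x + 1) div 2) + int b * (y * (y + 1) div 2)
                                 + int c * (z * (z + 1) div 2)}"
  let ?O = "{(x, y, z). odd x \<and> odd y \<and> odd z \<and>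
              int a * x^2 + int b * y^2 + int c * z^2 = int (8 * n + a + b + c)}"
  have "?O = ?f ` ?T"
  proof (intro equalityI subsetI)
    fix p assume "p \<in> ?O"
    then obtain x y z where p: "p = ?f (x, y, z)"
      and "int a * (2 * x + 1)^2 + int b * (2 * y + 1)^2 + int c * (2 * z + 1)^2 = int (8 * n + a + b + c)"
      by (auto elim!: oddE)
    then show "p \<in> ?f ` ?T"
      unfolding key by (intro rev_image_eqI[of "(x, y, z)"]) simp_all
  next
    fix p assume "p \<in> ?f ` ?T"
    then show "p \<in> ?O"
      using key by auto
  qed
  moreover have "inj ?f"
    by (auto simp: inj_def)
  ultimately show ?thesis
    unfolding t_def by (simp add: card_image inj_on_subset)
qed

lemma finite_ternary_form:
  fixes a b c m :: int
  assumes "a > 0" "b > 0" "c > 0"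
  shows "finite {(x, y, z). a * x^2 + b * y^2 + c * z^2 = m}"
proof (rule finite_subset)
  have abs_le: "\<bar>w\<bar> \<le> k * w^2" if "k > 0" for k w :: int
  proof -
    have "\<bar>w\<bar> \<le> \<bar>w\<bar> * \<bar>w\<bar>"
      using mult_left_mono[of 1 "\<bar>w\<bar>" "\<bar>w\<bar>"] by (cases "w = 0") auto
    also have "\<dots> \<le> k * w^2"
      using that mult_right_mono[of 1 k "w^2"] by (simp add: power2_eq_square abs_mult_self_eq)
    finally show ?thesis .
  qed
  have "0 \<le> k * w^2" if "k > 0" for k w :: int
    using that by simp
  then show "{(x, y, z). a * x^2 + b * y^2 + c * z^2 = m} \<subseteq> {-m..m} \<times> {-m..m} \<times> {-m..m}"
    using assms abs_le by clarsimp (smt (verit))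
qed auto

lemma int_square_mod_4: "(x::int)^2 mod 4 = (if odd x then 1 else 0)"
proof -
  have "x^2 mod 4 = (x mod 4)^2 mod 4"
    by (simp add: power_mod)
  moreover have "x mod 4 \<in> {0, 1, 2, 3}"
    by auto
  ultimately show ?thesis
    by auto presburger+
qed

lemma int_square_mod_8: "(x::int)^2 mod 8 = (if odd x then 1 else if 4 dvd x then 0 else 4)"
proof -
  have "x^2 mod 8 = (x mod 8)^2 mod 8"
    by (simp add: power_mod)
  moreover have "x mod 8 \<in> {0, 1, 2, 3, 4, 5, 6, 7}"
    by auto
  ultimately show ?thesis
    by auto presburger+
qed

lemma ternary_square_mod:
  fixes x y z :: int
  assumes "a * x^2 + b * y^2 + c * z^2 = m"
  shows "(a * (x^2 mod d) + b * (y^2 mod d) + c * (z^2 mod d)) mod d = m mod d"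
  unfolding assms[symmetric] by (intro mod_add_cong mod_mult_cong) simp_all

lemma x2_3y2_parity:
  fixes c d r u v z :: int
  assumes "d * (u^2 + 3 * v^2) + c * z^2 = 4 * r" "odd z" "odd c" "odd d"
  shows "(odd u \<longleftrightarrow> 4 dvd c + d) \<and> (odd v \<longleftrightarrow> \<not> 4 dvd c + d)"
proof -
  have "(d * (u^2 mod 4) + 3 * d * (v^2 mod 4) + c * (z^2 mod 4)) mod 4 = (4 * r) mod 4"
    by (rule ternary_square_mod) (use assms(1) in \<open>simp add: algebra_simps\<close>)
  then show ?thesis
    using assms(2-4) unfolding int_square_mod_4 by (auto split: if_splits) presburger+
qed

lemma odd_x2_3y2_if_mod_4:
  fixes c d r p q a :: int
  assumes "d * (p^2 + 3 * q^2) + c * a^2 = r" "r mod 4 \<noteq> 0" "r mod 4 \<noteq> c mod 4"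
  shows "odd (p^2 + 3 * q^2)"
proof -
  have "(d * (p^2 mod 4) + 3 * d * (q^2 mod 4) + c * (a^2 mod 4)) mod 4 = r mod 4"
    by (rule ternary_square_mod) (use assms(1) in \<open>simp add: algebra_simps\<close>)
  then show ?thesis
    using assms(2,3) unfolding int_square_mod_4 by (auto split: if_splits)
qed

lemma card_odd_triples_x2_3y2:
  fixes c d r :: int
  assumes "odd c" "odd d"
  shows "card {(x, y, z). odd x \<and> odd y \<and> odd z \<and> d * (x^2 + 3 * y^2) + 4 * c * z^2 = 16 * r}
       = 2 * card {(u, v, z). odd z \<and> (odd u \<longleftrightarrow> 4 dvd c + d) \<and> (odd v \<longleftrightarrow> \<not> 4 dvd c + d) \<and>
                             d * (u^2 + 3 * v^2) + c * z^2 = 4 * r}"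
proof -
  have "(odd (u^2 + 3 * v^2) \<and> odd z \<and> d * (4 * (u^2 + 3 * v^2)) + 4 * c * z^2 = 16 * r)
    \<longleftrightarrow> (odd z \<and> (odd u \<longleftrightarrow> 4 dvd c + d) \<and> (odd v \<longleftrightarrow> \<not> 4 dvd c + d) \<and>
         d * (u^2 + 3 * v^2) + c * z^2 = 4 * r)" for u v z
  proof -
    have scale: "d * (4 * (u^2 + 3 * v^2)) + 4 * c * z^2 = 4 * (d * (u^2 + 3 * v^2) + c * z^2)"
      by (simp add: algebra_simps)
    have "d * (4 * (u^2 + 3 * v^2)) + 4 * c * z^2 = 16 * r \<longleftrightarrow> d * (u^2 + 3 * v^2) + c * z^2 = 4 * r"
      by (simp only: scale) arith
    then show ?thesis
      using x2_3y2_parity[of d u v c z r] assms by auto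
  qed
  then show ?thesis
    using card_odd_x2_3y2[of "\<lambda>s z. odd z \<and> d * s + 4 * c * z^2 = 16 * r"] by simp
qed

lemma card_odd_odd_even_x2_3y2:
  fixes e f r :: int
  assumes "r mod 4 \<noteq> 0" "r mod 4 \<noteq> f mod 4"
  shows "card {(x, y, z). odd x \<and> odd y \<and> even z \<and> e * (x^2 + 3 * y^2) + f * z^2 = 4 * r}
       = 2 * card {(p, q, a). e * (p^2 + 3 * q^2) + f * a^2 = r}"
proof -
  have "card {(x, y, z). odd x \<and> odd y \<and> even z \<and> e * (x^2 + 3 * y^2) + f * z^2 = 4 * r}
      = 2 * card {(p, q, z). odd (p^2 + 3 * q^2) \<and> even z \<and> e * (4 * (p^2 + 3 * q^2)) + f * z^2 = 4 * r}"
    using card_odd_x2_3y2[of "\<lambda>s z. even z \<and> e * s + f * z^2 = 4 * r"] by simp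
  also have "\<dots> = 2 * card {(p, q, a). odd (p^2 + 3 * q^2) \<and> e * (4 * (p^2 + 3 * q^2)) + f * (2 * a)^2 = 4 * r}"
    using card_even_third[of "\<lambda>p q z. odd (p^2 + 3 * q^2) \<and> e * (4 * (p^2 + 3 * q^2)) + f * z^2 = 4 * r"]
    by (simp add: conj_ac)
  also have "\<dots> = 2 * card {(p, q, a). e * (p^2 + 3 * q^2) + f * a^2 = r}"
  proof -
    have scale: "e * (4 * (p^2 + 3 * q^2)) + f * (2 * a)^2 = 4 * (e * (p^2 + 3 * q^2) + f * a^2)" for p q a
      by (simp add: algebra_simps power_mult_distrib)
    have "e * (4 * (p^2 + 3 * q^2)) + f * (2 * a)^2 = 4 * r \<longleftrightarrow> e * (p^2 + 3 * q^2) + f * a^2 = r" for p q a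
      by (simp only: scale) arith
    then have "odd (p^2 + 3 * q^2) \<and> e * (4 * (p^2 + 3 * q^2)) + f * (2 * a)^2 = 4 * r
        \<longleftrightarrow> e * (p^2 + 3 * q^2) + f * a^2 = r" for p q a
      using odd_x2_3y2_if_mod_4[of e p q f a r] assms by blast
    then show ?thesis
      by simp
  qed
  finally show ?thesis .
qed

lemma card_x2_3y2_4cz2:
  fixes c d r :: int
  assumes "c > 0" "d > 0" "odd d" "r mod 4 \<noteq> 0" "r mod 4 \<noteq> c mod 4"
  shows "card {(x, y, z). d * (x^2 + 3 * y^2) + 4 * c * z^2 = 4 * r}
       = 3 * card {(p, q, a). d * (p^2 + 3 * q^2) + c * a^2 = r}"
proof -
  have "card {(x, y, z). d * (x^2 + 3 * y^2) + 4 * c * z^2 = 4 * r}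
      = 3 * card {(u, v, z). d * (4 * (u^2 + 3 * v^2)) + 4 * c * z^2 = 4 * r}"
  proof (rule card_x2_3y2_eq_3_times)
    show "finite {(x, y, z). d * (x^2 + 3 * y^2) + 4 * c * z^2 = 4 * r}"
      using finite_ternary_form[of d "3 * d" "4 * c" "4 * r"] assms(1,2) by (simp add: algebra_simps)
    show "even s" if "d * s + 4 * c * z^2 = 4 * r" for s z
    proof -
      have "d * s = 2 * (2 * r - 2 * c * z^2)"
        using that by simp
      then show ?thesis
        using \<open>odd d\<close> by (metis dvd_triv_left even_mult_iff)
    qed
    show "odd (u^2 + 3 * v^2)" if "d * (4 * (u^2 + 3 * v^2)) + 4 * c * z^2 = 4 * r" for u v z
      using that odd_x2_3y2_if_mod_4[of d u v c z r] assms(4,5) by (simp add: algebra_simps)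
  qed
  also have "\<dots> = 3 * card {(p, q, a). d * (p^2 + 3 * q^2) + c * a^2 = r}"
    by (intro arg_cong[where f="\<lambda>A. 3 * card A"]) (auto simp: algebra_simps)
  finally show ?thesis .
qed

lemma x2_4y2_3z2_mod_8:
  fixes M w z v :: int
  assumes "M mod 8 = 7" "w^2 + 4 * z^2 + 3 * v^2 = M"
  shows "even w \<and> odd (w div 2 + z)"
proof -
  have "(1 * (w^2 mod 8) + 4 * (z^2 mod 8) + 3 * (v^2 mod 8)) mod 8 = M mod 8"
    by (rule ternary_square_mod) (use assms(2) in simp)
  then show ?thesis
    using assms(1) unfolding int_square_mod_8 by (auto split: if_splits) presburger+
qed

lemma N_1_3_16_eq_card: "N 1 3 16 m = card {(w, z, v). w^2 + 16 * z^2 + 3 * v^2 = int m}"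
  using card_swap23[of "\<lambda>x y z. x^2 + 3 * y^2 + 16 * z^2 = int m"]
  unfolding N_def by (simp add: ac_simps eq_commute)

lemma t_1_3_16_eq_N:
  assumes "n mod 4 = 1"
  shows "t 1 3 16 n = 2 * N 1 3 16 (2 * n + 5)"
proof -
  define M where "M = int (2 * n + 5)"
  have "M mod 8 = 7"
    using assms unfolding M_def by presburger
  then have "odd M"
    by presburger
  note cong = x2_4y2_3z2_mod_8[OF \<open>M mod 8 = 7\<close>]
  have "t 1 3 16 n = card {(x, y, z). odd x \<and> odd y \<and> odd z \<and> x^2 + 3 * y^2 + 16 * z^2 = 4 * M}"
    unfolding t_eq_card_odd M_def by (simp add: ac_simps)
  also have "\<dots> = 2 * card {(u, v, z). odd (u^2 + 3 * v^2) \<and> odd z \<and> 4 * (u^2 + 3 * v^2) + 16 * z^2 = 4 * M}"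
    by (rule card_odd_x2_3y2[of "\<lambda>s z. odd z \<and> s + 16 * z^2 = 4 * M"])
  also have "\<dots> = 2 * card {(u, v, z). odd z \<and> u^2 + 3 * v^2 + 4 * z^2 = M}"
    using \<open>odd M\<close> by (intro arg_cong[where f="\<lambda>A. 2 * card A"]) auto
  also have "\<dots> = 2 * card {(w, z, v). odd z \<and> w^2 + 4 * z^2 + 3 * v^2 = M}"
    using card_swap23[of "\<lambda>u v z. odd z \<and> u^2 + 3 * v^2 + 4 * z^2 = M"] by (simp add: ac_simps)
  also have "\<dots> = 2 * N 1 3 16 (2 * n + 5)"
    using bij_betw_same_card[OF bij_betw_x2_16y2_odd[of "\<lambda>s v. s + 3 * v^2 = M", OF cong]]
    unfolding N_1_3_16_eq_card M_def[symmetric] by simp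
  finally show ?thesis .
qed

lemma t_2_2_3_eq_N:
  assumes "n mod 4 = 1"
  shows "t 2 2 3 ((n - 1) div 4) = 2 * N 1 3 16 (2 * n + 5)"
proof -
  define M where "M = int (2 * n + 5)"
  have "M mod 8 = 7"
    using assms unfolding M_def by presburger
  then have "odd M"
    by presburger
  note cong = x2_4y2_3z2_mod_8[OF \<open>M mod 8 = 7\<close>]
  have index: "8 * ((n - 1) div 4) + 2 + 2 + 3 = 2 * n + 5"
    using assms by presburger
  have "t 2 2 3 ((n - 1) div 4) = card {(x, y, v). odd x \<and> odd y \<and> odd v \<and> 2 * x^2 + 2 * y^2 + 3 * v^2 = M}"
    unfolding t_eq_card_odd index M_def by (simp add: ac_simps)
  also have "\<dots> = card {(x, y, v). odd x \<and> odd y \<and> 2 * (x^2 + y^2) + 3 * v^2 = M}"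
    using \<open>odd M\<close> by (intro arg_cong[where f=card]) auto
  also have "\<dots> = card {(w, z, v). w^2 + 4 * z^2 + 3 * v^2 = M}"
    using card_odd_2x2_2y2[of "\<lambda>s v. s + 3 * v^2 = M", OF cong] by simp
  also have "\<dots> = 2 * N 1 3 16 (2 * n + 5)"
    using card_x2_4y2_eq_double[of "\<lambda>s v. s + 3 * v^2 = M", OF cong]
    unfolding N_1_3_16_eq_card M_def[symmetric] by simp
  finally show ?thesis .
qed

lemma x2_4y2_times_3_mod_8:
  fixes M w z u :: int
  assumes "M mod 8 = 5" "3 * (w^2 + 4 * z^2) + u^2 = M"
  shows "even w \<and> odd (w div 2 + z)"
proof -
  have "(3 * (w^2 mod 8) + 12 * (z^2 mod 8) + 1 * (u^2 mod 8)) mod 8 = M mod 8"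
    by (rule ternary_square_mod) (use assms(2) in simp)
  then show ?thesis
    using assms(1) unfolding int_square_mod_8 by (auto split: if_splits) presburger+
qed

lemma N_1_3_48_eq_card: "N 1 3 48 m = card {(w, z, u). 3 * (w^2 + 16 * z^2) + u^2 = int m}"
  using card_rotate[of "\<lambda>x y z. x^2 + 3 * y^2 + 48 * z^2 = int m"]
  unfolding N_def by (simp add: algebra_simps eq_commute)

lemma t_1_3_48_eq_N:
  assumes "n mod 4 = 0"
  shows "t 1 3 48 n = 2 * N 1 3 48 (2 * n + 13)"
proof -
  define M where "M = int (2 * n + 13)"
  have "M mod 8 = 5"
    using assms unfolding M_def by presburger
  then have "odd M"
    by presburger
  note cong = x2_4y2_times_3_mod_8[OF \<open>M mod 8 = 5\<close>]
  have "t 1 3 48 n = card {(x, y, z). odd x \<and> odd y \<and> odd z \<and> x^2 + 3 * y^2 + 48 * z^2 = 4 * M}"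
    unfolding t_eq_card_odd M_def by (simp add: ac_simps)
  also have "\<dots> = 2 * card {(u, v, z). odd (u^2 + 3 * v^2) \<and> odd z \<and> 4 * (u^2 + 3 * v^2) + 48 * z^2 = 4 * M}"
    by (rule card_odd_x2_3y2[of "\<lambda>s z. odd z \<and> s + 48 * z^2 = 4 * M"])
  also have "\<dots> = 2 * card {(u, v, z). odd z \<and> u^2 + 3 * v^2 + 12 * z^2 = M}"
    using \<open>odd M\<close> by (intro arg_cong[where f="\<lambda>A. 2 * card A"]) auto
  also have "\<dots> = 2 * card {(w, z, u). odd z \<and> 3 * (w^2 + 4 * z^2) + u^2 = M}"
    using card_rotate[of "\<lambda>u v z. odd z \<and> u^2 + 3 * v^2 + 12 * z^2 = M"] by (simp add: algebra_simps)
  also have "\<dots> = 2 * N 1 3 48 (2 * n + 13)"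
    using bij_betw_same_card[OF bij_betw_x2_16y2_odd[of "\<lambda>s u. 3 * s + u^2 = M", OF cong]]
    unfolding N_1_3_48_eq_card M_def[symmetric] by simp
  finally show ?thesis .
qed

lemma t_1_6_6_eq_N:
  assumes "n mod 4 = 0"
  shows "t 1 6 6 (n div 4) = 2 * N 1 3 48 (2 * n + 13)"
proof -
  define M where "M = int (2 * n + 13)"
  have "M mod 8 = 5"
    using assms unfolding M_def by presburger
  then have "odd M"
    by presburger
  note cong = x2_4y2_times_3_mod_8[OF \<open>M mod 8 = 5\<close>]
  have index: "8 * (n div 4) + 1 + 6 + 6 = 2 * n + 13"
    using assms by presburger
  have "t 1 6 6 (n div 4) = card {(x, y, w). odd x \<and> odd y \<and> odd w \<and> x^2 + 6 * y^2 + 6 * w^2 = M}"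
    unfolding t_eq_card_odd index M_def by (simp add: ac_simps)
  also have "\<dots> = card {(y, w, x). odd x \<and> odd y \<and> odd w \<and> x^2 + 6 * y^2 + 6 * w^2 = M}"
    by (rule card_rotate[symmetric])
  also have "\<dots> = card {(y, w, x). odd y \<and> odd w \<and> 3 * (2 * (y^2 + w^2)) + x^2 = M}"
    using \<open>odd M\<close> by (intro arg_cong[where f=card]) auto
  also have "\<dots> = card {(w, z, u). 3 * (w^2 + 4 * z^2) + u^2 = M}"
    using card_odd_2x2_2y2[of "\<lambda>s u. 3 * s + u^2 = M", OF cong] by simp
  also have "\<dots> = 2 * N 1 3 48 (2 * n + 13)"
    using card_x2_4y2_eq_double[of "\<lambda>s u. 3 * s + u^2 = M", OF cong]
    unfolding N_1_3_48_eq_card M_def[symmetric] by simp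
  finally show ?thesis .
qed

lemma t_1_3_4_eq_N:
  assumes "n mod 8 \<in> {3, 5}"
  shows "3 * t 1 3 4 n = 4 * N 1 3 4 (2 * n + 2)"
proof -
  define r where "r = int ((n + 1) div 2)"
  have r: "int (2 * n + 2) = 4 * r" "int (8 * n + 1 + 3 + 4) = 16 * r" "r mod 4 \<noteq> 0" "r mod 4 \<noteq> 1"
    using assms unfolding r_def by auto presburger+
  let ?C = "{(p, q, a). p^2 + 3 * q^2 + a^2 = r}"
  have "t 1 3 4 n = 2 * card {(u, v, z). odd z \<and> even u \<and> odd v \<and> u^2 + 3 * v^2 + z^2 = 4 * r}"
    using card_odd_triples_x2_3y2[of 1 1 r] unfolding t_eq_card_odd r(2) by simp
  also have "\<dots> = 2 * card {(z, v, u). odd z \<and> odd v \<and> even u \<and> z^2 + 3 * v^2 + u^2 = 4 * r}"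
    using card_swap13[of "\<lambda>u v z. odd z \<and> even u \<and> odd v \<and> u^2 + 3 * v^2 + z^2 = 4 * r"]
    by (simp add: ac_simps conj_ac)
  also have "\<dots> = 4 * card ?C"
    using card_odd_odd_even_x2_3y2[of r 1 1] r(3,4) by simp
  finally have t: "t 1 3 4 n = 4 * card ?C" .
  have N: "N 1 3 4 (2 * n + 2) = card {(x, y, z). x^2 + 3 * y^2 + 4 * z^2 = 4 * r}"
    unfolding N_def r(1) by (simp add: eq_commute)
  show ?thesis
    using t N card_x2_3y2_4cz2[of 1 1 r] r(3,4) by simp
qed

lemma t_1_3_12_eq_N:
  assumes "n mod 8 \<in> {0, 2}"
  shows "3 * t 1 3 12 n = 4 * N 1 3 12 (2 * n + 4)"
proof -
  define r where "r = int ((n + 2) div 2)"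
  have r: "int (2 * n + 4) = 4 * r" "int (8 * n + 1 + 3 + 12) = 16 * r" "r mod 4 \<noteq> 0" "r mod 4 \<noteq> 3"
    using assms unfolding r_def by auto presburger+
  let ?C = "{(p, q, a). p^2 + 3 * q^2 + 3 * a^2 = r}"
  have "t 1 3 12 n = 2 * card {(u, v, z). odd z \<and> odd u \<and> even v \<and> u^2 + 3 * v^2 + 3 * z^2 = 4 * r}"
    using card_odd_triples_x2_3y2[of 3 1 r] unfolding t_eq_card_odd r(2) by simp
  also have "\<dots> = 2 * card {(u, z, v). odd u \<and> odd z \<and> even v \<and> u^2 + 3 * z^2 + 3 * v^2 = 4 * r}"
    using card_swap23[of "\<lambda>u v z. odd z \<and> odd u \<and> even v \<and> u^2 + 3 * v^2 + 3 * z^2 = 4 * r"]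
    by (simp add: ac_simps conj_ac)
  also have "\<dots> = 4 * card ?C"
    using card_odd_odd_even_x2_3y2[of r 3 1] r(3,4) by simp
  finally have t: "t 1 3 12 n = 4 * card ?C" .
  have N: "N 1 3 12 (2 * n + 4) = card {(x, y, z). x^2 + 3 * y^2 + 12 * z^2 = 4 * r}"
    unfolding N_def r(1) by (simp add: eq_commute)
  show ?thesis
    using t N card_x2_3y2_4cz2[of 3 1 r] r(3,4) by simp
qed

lemma t_1_3_36_eq_N:
  assumes "n mod 8 \<in> {1, 7}"
  shows "3 * t 1 3 36 n = 4 * N 1 3 36 (2 * n + 10)"
proof -
  define r where "r = int ((n + 5) div 2)"
  have r: "int (2 * n + 10) = 4 * r" "int (8 * n + 1 + 3 + 36) = 16 * r" "r mod 4 \<noteq> 0" "r mod 4 \<noteq> 1"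
    using assms unfolding r_def by auto presburger+
  let ?C = "{(p, q, a). p^2 + 3 * q^2 + 9 * a^2 = r}"
  have "t 1 3 36 n = 2 * card {(u, v, z). odd z \<and> even u \<and> odd v \<and> u^2 + 3 * v^2 + 9 * z^2 = 4 * r}"
    using card_odd_triples_x2_3y2[of 9 1 r] unfolding t_eq_card_odd r(2) by simp
  also have "\<dots> = 2 * card {(v, z, u). odd v \<and> odd z \<and> even u \<and> 3 * (v^2 + 3 * z^2) + u^2 = 4 * r}"
    using card_rotate[of "\<lambda>u v z. odd z \<and> even u \<and> odd v \<and> u^2 + 3 * v^2 + 9 * z^2 = 4 * r"]
    by (simp add: algebra_simps conj_ac)
  also have "\<dots> = 4 * card {(p, q, a). 3 * (p^2 + 3 * q^2) + a^2 = r}"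
    using card_odd_odd_even_x2_3y2[of r 1 3] r(3,4) by simp
  also have "\<dots> = 4 * card ?C"
    using card_rotate[of "\<lambda>a p q. a^2 + 3 * p^2 + 9 * q^2 = r"] by (simp add: algebra_simps)
  finally have t: "t 1 3 36 n = 4 * card ?C" .
  have N: "N 1 3 36 (2 * n + 10) = card {(x, y, z). x^2 + 3 * y^2 + 36 * z^2 = 4 * r}"
    unfolding N_def r(1) by (simp add: eq_commute)
  show ?thesis
    using t N card_x2_3y2_4cz2[of 9 1 r] r(3,4) by simp
qed

lemma t_3_4_9_eq_N:
  assumes "n mod 8 \<in> {2, 4}"
  shows "3 * t 3 4 9 n = 4 * N 3 4 9 (2 * n + 4)"
proof -
  define r where "r = int ((n + 2) div 2)"
  have r: "int (2 * n + 4) = 4 * r" "int (8 * n + 3 + 4 + 9) = 16 * r" "r mod 4 \<noteq> 0" "r mod 4 \<noteq> 1"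
    using assms unfolding r_def by auto presburger+
  let ?C = "{(p, q, a). 3 * (p^2 + 3 * q^2) + a^2 = r}"
  have "t 3 4 9 n = card {(x, y, w). odd x \<and> odd y \<and> odd w \<and> 3 * (x^2 + 3 * y^2) + 4 * w^2 = 16 * r}"
    using card_swap23[of "\<lambda>x y z. odd x \<and> odd y \<and> odd z \<and> 3 * x^2 + 4 * y^2 + 9 * z^2 = 16 * r"]
    unfolding t_eq_card_odd r(2) by (simp add: algebra_simps conj_ac)
  also have "\<dots> = 2 * card {(u, v, w). odd w \<and> odd u \<and> even v \<and> 3 * (u^2 + 3 * v^2) + w^2 = 4 * r}"
    using card_odd_triples_x2_3y2[of 1 3 r] by simp
  also have "\<dots> = 2 * card {(w, u, v). odd w \<and> odd u \<and> even v \<and> w^2 + 3 * u^2 + 9 * v^2 = 4 * r}"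
    using card_rotate[of "\<lambda>w u v. odd w \<and> odd u \<and> even v \<and> w^2 + 3 * u^2 + 9 * v^2 = 4 * r"]
    by (simp add: algebra_simps conj_ac)
  also have "\<dots> = 4 * card {(p, q, a). p^2 + 3 * q^2 + 9 * a^2 = r}"
    using card_odd_odd_even_x2_3y2[of r 9 1] r(3,4) by simp
  also have "\<dots> = 4 * card ?C"
    using card_rotate[of "\<lambda>a p q. a^2 + 3 * p^2 + 9 * q^2 = r"] by (simp add: algebra_simps)
  finally have t: "t 3 4 9 n = 4 * card ?C" .
  have N: "N 3 4 9 (2 * n + 4) = card {(x, y, w). 3 * (x^2 + 3 * y^2) + 4 * w^2 = 4 * r}"
    using card_swap23[of "\<lambda>x y z. 3 * x^2 + 4 * y^2 + 9 * z^2 = 4 * r"]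
    unfolding N_def r(1) by (simp add: algebra_simps eq_commute)
  show ?thesis
    using t N card_x2_3y2_4cz2[of 1 3 r] r(3,4) by simp
qed

theorem theorem4p1:
  fixes n :: nat
  assumes "n > 0"
  shows "(n mod 4 = 1 \<longrightarrow>
            t 1 3 16 n = 2 * N 1 3 16 (2*n + 5) \<and> 2 * N 1 3 16 (2*n + 5) = t 2 2 3 ((n - 1) div 4))
       \<and> (n mod 4 = 0 \<longrightarrow>
            t 1 3 48 n = 2 * N 1 3 48 (2*n + 13) \<and> 2 * N 1 3 48 (2*n + 13) = t 1 6 6 (n div 4))
       \<and> (n mod 8 \<in> {3, 5} \<longrightarrow> real (t 1 3 4 n) = 4/3 * real (N 1 3 4 (2*n + 2)))
       \<and> (n mod 8 \<in> {0, 2} \<longrightarrow> real (t 1 3 12 n) = 4/3 * real (N 1 3 12 (2*n + 4)))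
       \<and> (n mod 8 \<in> {1, 7} \<longrightarrow> real (t 1 3 36 n) = 4/3 * real (N 1 3 36 (2*n + 10)))
       \<and> (n mod 8 \<in> {2, 4} \<longrightarrow> real (t 3 4 9 n) = 4/3 * real (N 3 4 9 (2*n + 4)))"
proof -
  \<comment> \<open>The identities also hold for n = 0.\<close>
  have real: "real k = 4/3 * real m" if "3 * k = 4 * m" for k m :: nat
  proof -
    have "3 * real k = 4 * real m"
      using that by (metis of_nat_mult of_nat_numeral)
    then show ?thesis
      by simp
  qed
  show ?thesis
    using t_1_3_16_eq_N[of n] t_2_2_3_eq_N[of n] t_1_3_48_eq_N[of n] t_1_6_6_eq_N[of n]
      real[OF t_1_3_4_eq_N] real[OF t_1_3_12_eq_N] real[OF t_1_3_36_eq_N] real[OF t_3_4_9_eq_N]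
    by auto
qed

end
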